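(* Let $X$ be a compact $\ell_1$-convex subset of $\mathbb{R}^m$, $Y$ a compact $\ell_1$-convex subset of $\mathbb{R}^n$, and $0\le k\le m+n$. Then $X\times Y\subseteq\mathbb{R}^{m+n}$ satisfies \[ V_k(X\times Y)=\sum_{i+j=k}V_i(X)V_j(Y), \] where $0\le i\le m$ and $0\le j\le n$ in the summation.
   Context: A subset $Z\subseteq\mathbb{R}^N$ is $\ell_1$-convex if for all $z,z'\in Z$, with $D=\sum_i|z_i-z'_i|$, there is $\gamma\colon[0,D]\to Z$ with $\gamma(0)=z,\gamma(D)=z'$ and $\sum_i|\gamma_i(t)-\gamma_i(t')|=|t-t'|$ for all $t,t'$; products of $\ell_1$-convex sets are $\ell_1$-convex. For a compact $\ell_1$-convex $Z\subseteq\mathbb{R}^N$, $V_i(Z)=\sum_{P\in G_{N,i}}\mathrm{Vol}_i(\pi_PZ)$, where $G_{N,i}$ is the set of $i$-dimensional coordinate subspaces of $\mathbb{R}^N$ (spanned by $i$ standard basis vectors), $\pi_P$ is orthogonal projection, and $\mathrm{Vol}_i$ is Lebesgue measure on $P$. *)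

theory Defs
  imports "HOL-Analysis.Analysis"
begin

text \<open>Points of R^N are represented as extensional functions in PiE {..<N} (%_. UNIV)
  (coordinates 0..N-1; value undefined elsewhere).\<close>

definition euclid :: "nat \<Rightarrow> (nat \<Rightarrow> real) set" where
  "euclid N = PiE {..<N} (\<lambda>_. UNIV)"

definition l1dist :: "nat \<Rightarrow> (nat \<Rightarrow> real) \<Rightarrow> (nat \<Rightarrow> real) \<Rightarrow> real" where
  "l1dist N z z' = (\<Sum>i<N. \<bar>z i - z' i\<bar>)"

definition l1_convex :: "nat \<Rightarrow> (nat \<Rightarrow> real) set \<Rightarrow> bool" where
  "l1_convex N Z \<longleftrightarrow> (\<forall>z\<in>Z. \<forall>z'\<in>Z.
     (\<exists>\<gamma> :: real \<Rightarrow> (nat \<Rightarrow> real).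
        \<gamma> 0 = z \<and> \<gamma> (l1dist N z z') = z' \<and>
        (\<forall>t\<in>{0..l1dist N z z'}. \<gamma> t \<in> Z) \<and>
        (\<forall>t\<in>{0..l1dist N z z'}. \<forall>t'\<in>{0..l1dist N z z'}.
            l1dist N (\<gamma> t) (\<gamma> t') = \<bar>t - t'\<bar>)))"

definition coord_subspaces :: "nat \<Rightarrow> nat \<Rightarrow> nat set set" where
  "coord_subspaces N i = {S. S \<subseteq> {..<N} \<and> card S = i}"

definition proj_vol :: "nat set \<Rightarrow> (nat \<Rightarrow> real) set \<Rightarrow> real" where
  "proj_vol S Z = measure (PiM S (\<lambda>_. lborel)) ((\<lambda>z. restrict z S) ` Z)"

definition intrinsic_vol :: "nat \<Rightarrow> nat \<Rightarrow> (nat \<Rightarrow> real) set \<Rightarrow> real" where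
  "intrinsic_vol N i Z = (\<Sum>S\<in>coord_subspaces N i. proj_vol S Z)"

definition prod_set :: "nat \<Rightarrow> nat \<Rightarrow> (nat \<Rightarrow> real) set \<Rightarrow> (nat \<Rightarrow> real) set \<Rightarrow> (nat \<Rightarrow> real) set" where
  "prod_set m n X Y = {(\<lambda>i. if i < m then x i else if i < m + n then y (i - m) else undefined)
                        | x y. x \<in> X \<and> y \<in> Y}"

end

theory Submission
  imports Defs
begin

text \<open>A coordinate subspace of dimension \<open>k\<close> of \<open>\<real>\<^sup>m\<^sup>+\<^sup>n\<close> splits uniquely as \<open>S1 \<union> (m + S2)\<close>
  with \<open>S1\<close> a set of \<open>i\<close> of the first \<open>m\<close> coordinates, \<open>S2\<close> a set of \<open>j\<close> of the last \<open>n\<close>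
  coordinates and \<open>i + j = k\<close>. The projection of \<open>X \<times> Y\<close> onto it is the product of the
  projections of \<open>X\<close> onto \<open>S1\<close> and of \<open>Y\<close> onto \<open>S2\<close>, so by Fubini its volume is the product
  of their volumes; summing over all splittings gives the formula.\<close>

lemma sets_PiM_lborel_if_borel:
  fixes K :: "('i::countable \<Rightarrow> real) set"
  assumes "K \<in> sets borel" "K \<subseteq> PiE S (\<lambda>_. UNIV)"
  shows "K \<in> sets (PiM S (\<lambda>_. lborel))"
proof -
  have "(\<lambda>\<omega>. \<omega>) \<in> PiM S (\<lambda>_. lborel) \<rightarrow>\<^sub>M PiM UNIV (\<lambda>_::'i. borel :: real measure)"
  proof (rule measurable_PiM_single')
    fix i
    show "(\<lambda>\<omega>. \<omega> i) \<in> PiM S (\<lambda>_. lborel) \<rightarrow>\<^sub>M (borel :: real measure)"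
    proof (cases "i \<in> S")
      case True
      then show ?thesis
        using measurable_component_singleton[of i S "\<lambda>_. lborel"] by (simp cong: measurable_cong_sets)
    next
      case False
      have "(\<lambda>\<omega>. \<omega> i) \<in> PiM S (\<lambda>_. lborel) \<rightarrow>\<^sub>M (borel :: real measure) \<longleftrightarrow>
          (\<lambda>_. undefined :: real) \<in> PiM S (\<lambda>_. lborel :: real measure) \<rightarrow>\<^sub>M borel"
        by (rule measurable_cong) (use False in \<open>auto simp: space_PiM PiE_def extensional_def\<close>)
      then show ?thesis by simp
    qed
  qed simp
  moreover have "K \<in> sets (PiM UNIV (\<lambda>_::'i. borel :: real measure))"
    using assms(1) by (simp add: sets_PiM_equal_borel)
  ultimately have "(\<lambda>\<omega>. \<omega>) -` K \<inter> space (PiM S (\<lambda>_. lborel)) \<in> sets (PiM S (\<lambda>_. lborel))"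
    by (rule measurable_sets)
  also have "(\<lambda>\<omega>. \<omega>) -` K \<inter> space (PiM S (\<lambda>_. lborel)) = K"
    using assms(2) by (auto simp: space_PiM)
  finally show ?thesis .
qed

lemma distr_PiM_reindex:
  fixes f :: "'i \<Rightarrow> 'j"
  assumes "sigma_finite_measure M" "finite I" "inj_on f I"
  shows "distr (PiM (f ` I) (\<lambda>_. M)) (PiM I (\<lambda>_. M)) (\<lambda>\<omega>. \<lambda>i\<in>I. \<omega> (f i)) = PiM I (\<lambda>_. M)"
proof -
  interpret product_sigma_finite "\<lambda>_::'i. M" using assms(1) by (simp add: product_sigma_finite_def)
  interpret J: product_sigma_finite "\<lambda>_::'j. M" using assms(1) by (simp add: product_sigma_finite_def)
  interpret J: finite_product_sigma_finite "\<lambda>_::'j. M" "f ` I" by standard (use assms in auto)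
  have meas: "(\<lambda>\<omega>. \<lambda>i\<in>I. \<omega> (f i)) \<in> PiM (f ` I) (\<lambda>_. M) \<rightarrow>\<^sub>M PiM I (\<lambda>_. M)"
    by (rule measurable_restrict) (auto intro!: measurable_component_singleton)
  show ?thesis
  proof (rule PiM_eqI)
    fix A assume A: "\<And>i. i \<in> I \<Longrightarrow> A i \<in> sets M"
    have "(\<lambda>\<omega>. \<lambda>i\<in>I. \<omega> (f i)) -` PiE I A \<inter> space (PiM (f ` I) (\<lambda>_. M))
        = PiE (f ` I) (\<lambda>j. A (the_inv_into I f j))"
      using assms A[THEN sets.sets_into_space]
      by (fastforce simp: space_PiM PiE_iff the_inv_into_f_f extensional_def)
    then have "emeasure (distr (PiM (f ` I) (\<lambda>_. M)) (PiM I (\<lambda>_. M)) (\<lambda>\<omega>. \<lambda>i\<in>I. \<omega> (f i))) (PiE I A)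
        = emeasure (PiM (f ` I) (\<lambda>_. M)) (PiE (f ` I) (\<lambda>j. A (the_inv_into I f j)))"
      using A by (subst emeasure_distr[OF meas]) (auto intro!: sets_PiM_I_finite assms)
    also have "\<dots> = (\<Prod>j\<in>f ` I. emeasure M (A (the_inv_into I f j)))"
      using A assms by (intro J.measure_times) (auto simp: the_inv_into_f_f)
    also have "\<dots> = (\<Prod>i\<in>I. emeasure M (A i))"
      using assms by (subst prod.reindex) (auto simp: the_inv_into_f_f)
    finally show "emeasure (distr (PiM (f ` I) (\<lambda>_. M)) (PiM I (\<lambda>_. M)) (\<lambda>\<omega>. \<lambda>i\<in>I. \<omega> (f i))) (PiE I A)
        = (\<Prod>i\<in>I. emeasure M (A i))" .
  qed (use assms in auto)
qed

definition append_coords :: "nat \<Rightarrow> nat \<Rightarrow> (nat \<Rightarrow> real) \<Rightarrow> (nat \<Rightarrow> real) \<Rightarrow> nat \<Rightarrow> real" where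
  "append_coords m n x y = (\<lambda>i. if i < m then x i else if i < m + n then y (i - m) else undefined)"

lemma prod_set_eq_image: "prod_set m n X Y = (\<lambda>(x, y). append_coords m n x y) ` (X \<times> Y)"
  unfolding prod_set_def append_coords_def by (auto simp del: split_paired_Ex)

lemma compact_restrict_image:
  assumes "compact K"
  shows "compact ((\<lambda>z::'i \<Rightarrow> real. restrict z S) ` K)"
proof (rule compact_continuous_image[OF _ assms])
  show "continuous_on K (\<lambda>z. restrict z S)"
  proof (rule continuous_on_coordinatewise_then_product)
    fix i
    show "continuous_on K (\<lambda>z. restrict z S i)"
      by (cases "i \<in> S") (auto intro: continuous_on_subset[OF continuous_on_product_coordinates])
  qed
qed

lemma restrict_image_in_sets_PiM_lborel:
  fixes K :: "('i::countable \<Rightarrow> real) set"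
  assumes "compact K"
  shows "(\<lambda>z. restrict z S) ` K \<in> sets (PiM S (\<lambda>_. lborel))"
  by (intro sets_PiM_lborel_if_borel borel_closed compact_imp_closed compact_restrict_image assms) auto

lemma compact_prod_set:
  assumes "compact X" "compact Y"
  shows "compact (prod_set m n X Y)"
  unfolding prod_set_eq_image
proof (rule compact_continuous_image)
  show "compact (X \<times> Y)" using assms by (rule compact_Times)
  show "continuous_on (X \<times> Y) (\<lambda>(x, y). append_coords m n x y)"
  proof (rule continuous_on_coordinatewise_then_product)
    fix i
    have "continuous_on (X \<times> Y) (\<lambda>p. fst p j)" "continuous_on (X \<times> Y) (\<lambda>p. snd p j)" for j
      by (rule continuous_on_product_then_coordinatewise, intro continuous_intros)+
    then show "continuous_on (X \<times> Y) (\<lambda>p. (case p of (x, y) \<Rightarrow> append_coords m n x y) i)"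
      unfolding append_coords_def case_prod_beta by (cases "i < m"; cases "i < m + n") simp_all
  qed
qed

lemma merge_eq_restrict_append_coords_iff:
  assumes "S1 \<subseteq> {..<m}" "S2 \<subseteq> {..<n}" "a \<in> extensional S1"
  shows "merge S1 ((\<lambda>j. j + m) ` S2) (a, b) = restrict (append_coords m n x y) (S1 \<union> (\<lambda>j. j + m) ` S2)
    \<longleftrightarrow> a = restrict x S1 \<and> (\<lambda>j\<in>S2. b (j + m)) = restrict y S2"
proof -
  have x: "append_coords m n x y i = x i" if "i \<in> S1" for i
    using that assms(1) by (auto simp: append_coords_def)
  have y: "append_coords m n x y (j + m) = y j" "j + m \<notin> S1" if "j \<in> S2" for j
    using that assms(1,2) by (auto simp: append_coords_def)
  show ?thesis
    using assms(3) x y by (auto simp: fun_eq_iff merge_def extensional_def)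
qed

lemma merge_preimage_restrict_prod_set:
  assumes "S1 \<subseteq> {..<m}" "S2 \<subseteq> {..<n}"
  defines "T \<equiv> (\<lambda>j. j + m) ` S2"
  shows "merge S1 T -` ((\<lambda>z. restrict z (S1 \<union> T)) ` prod_set m n X Y)
           \<inter> space (PiM S1 (\<lambda>_. lborel) \<Otimes>\<^sub>M PiM T (\<lambda>_. lborel))
         = (\<lambda>z. restrict z S1) ` X
           \<times> ((\<lambda>\<omega>. \<lambda>j\<in>S2. \<omega> (j + m)) -` ((\<lambda>z. restrict z S2) ` Y) \<inter> space (PiM T (\<lambda>_. lborel)))"
proof (intro set_eqI)
  fix p :: "(nat \<Rightarrow> real) \<times> (nat \<Rightarrow> real)"
  obtain a b where p: "p = (a, b)" by force
  have "p \<in> merge S1 T -` ((\<lambda>z. restrict z (S1 \<union> T)) ` prod_set m n X Y)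
           \<inter> space (PiM S1 (\<lambda>_. lborel) \<Otimes>\<^sub>M PiM T (\<lambda>_. lborel))
    \<longleftrightarrow> a \<in> extensional S1 \<and> b \<in> extensional T \<and>
        (\<exists>x\<in>X. \<exists>y\<in>Y. merge S1 T (a, b) = restrict (append_coords m n x y) (S1 \<union> T))"
    by (auto simp: p space_pair_measure space_PiM PiE_iff prod_set_eq_image)
  also have "\<dots> \<longleftrightarrow> a \<in> extensional S1 \<and> b \<in> extensional T \<and>
        (\<exists>x\<in>X. \<exists>y\<in>Y. a = restrict x S1 \<and> (\<lambda>j\<in>S2. b (j + m)) = restrict y S2)"
    using merge_eq_restrict_append_coords_iff[OF assms(1,2)] unfolding T_def by blast
  also have "\<dots> \<longleftrightarrow> p \<in> (\<lambda>z. restrict z S1) ` X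
           \<times> ((\<lambda>\<omega>. \<lambda>j\<in>S2. \<omega> (j + m)) -` ((\<lambda>z. restrict z S2) ` Y) \<inter> space (PiM T (\<lambda>_. lborel)))"
    by (auto simp: p space_PiM PiE_iff)
  finally show "p \<in> merge S1 T -` ((\<lambda>z. restrict z (S1 \<union> T)) ` prod_set m n X Y)
           \<inter> space (PiM S1 (\<lambda>_. lborel) \<Otimes>\<^sub>M PiM T (\<lambda>_. lborel))
    \<longleftrightarrow> p \<in> (\<lambda>z. restrict z S1) ` X
           \<times> ((\<lambda>\<omega>. \<lambda>j\<in>S2. \<omega> (j + m)) -` ((\<lambda>z. restrict z S2) ` Y) \<inter> space (PiM T (\<lambda>_. lborel)))" .
qed

lemma proj_vol_prod_set:
  assumes "compact X" "compact Y" "S1 \<subseteq> {..<m}" "S2 \<subseteq> {..<n}"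
  shows "proj_vol (S1 \<union> (\<lambda>j. j + m) ` S2) (prod_set m n X Y) = proj_vol S1 X * proj_vol S2 Y"
proof -
  interpret product_sigma_finite "\<lambda>_::nat. lborel :: real measure"
    by standard
  define T where "T = (\<lambda>j. j + m) ` S2"
  define shift where "shift = (\<lambda>\<omega>::nat \<Rightarrow> real. \<lambda>j\<in>S2. \<omega> (j + m))"
  let ?P1 = "PiM S1 (\<lambda>_. lborel :: real measure)"
  let ?P2 = "PiM T (\<lambda>_. lborel :: real measure)"
  let ?Q = "PiM S2 (\<lambda>_. lborel :: real measure)"
  define E where "E = (\<lambda>z. restrict z (S1 \<union> T)) ` prod_set m n X Y"
  define A where "A = (\<lambda>z. restrict z S1) ` X"
  define B where "B = (\<lambda>z. restrict z S2) ` Y"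
  have fin: "finite S1" "finite S2" "finite T"
    using finite_subset[OF assms(3)] finite_subset[OF assms(4)] by (auto simp: T_def)
  have disj: "S1 \<inter> T = {}"
    using assms(3) by (auto simp: T_def)
  have sets: "E \<in> sets (PiM (S1 \<union> T) (\<lambda>_. lborel))" "A \<in> sets ?P1" "B \<in> sets ?Q"
    unfolding E_def A_def B_def
    by (intro restrict_image_in_sets_PiM_lborel compact_prod_set assms(1,2))+
  have shift: "shift \<in> ?P2 \<rightarrow>\<^sub>M ?Q"
    unfolding shift_def T_def by (rule measurable_restrict) (auto intro!: measurable_component_singleton)
  have "distr ?P2 ?Q shift = ?Q"
    unfolding shift_def T_def by (rule distr_PiM_reindex) (use fin sigma_finite_lborel in auto)
  then have B: "measure ?Q B = measure ?P2 (shift -` B \<inter> space ?P2)"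
    using measure_distr[OF shift sets(3)] by simp
  interpret P2: finite_product_sigma_finite "\<lambda>_::nat. lborel :: real measure" T
    by standard (rule fin(3))
  have preimage: "merge S1 T -` E \<inter> space (?P1 \<Otimes>\<^sub>M ?P2) = A \<times> (shift -` B \<inter> space ?P2)"
    unfolding E_def A_def B_def shift_def T_def by (rule merge_preimage_restrict_prod_set[OF assms(3,4)])
  have "proj_vol (S1 \<union> T) (prod_set m n X Y) = measure (PiM (S1 \<union> T) (\<lambda>_. lborel)) E"
    by (simp add: proj_vol_def E_def)
  \<comment> \<open>Fubini: the product measure on \<open>S1 \<union> T\<close> is the image of \<open>?P1 \<Otimes>\<^sub>M ?P2\<close> under \<open>merge\<close>.\<close>
  also have "\<dots> = measure (distr (?P1 \<Otimes>\<^sub>M ?P2) (PiM (S1 \<union> T) (\<lambda>_. lborel)) (merge S1 T)) E"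
    by (simp add: distr_merge[OF disj fin(1,3)])
  also have "\<dots> = measure (?P1 \<Otimes>\<^sub>M ?P2) (A \<times> (shift -` B \<inter> space ?P2))"
    using measure_distr[OF measurable_merge sets(1)] preimage by simp
  also have "\<dots> = measure ?P1 A * measure ?P2 (shift -` B \<inter> space ?P2)"
    using sets(2) measurable_sets[OF shift sets(3)]
    by (simp add: measure_def P2.emeasure_pair_measure_Times enn2real_mult)
  also have "\<dots> = proj_vol S1 X * proj_vol S2 Y"
    by (simp add: proj_vol_def A_def B_def[symmetric] B[symmetric])
  finally show ?thesis by (simp add: T_def)
qed

lemma bij_betw_coord_subspaces_add:
  "bij_betw (\<lambda>(S1, S2). S1 \<union> (\<lambda>j. j + m) ` S2)
     (\<Union>(i, j)\<in>{(i, j). i \<le> m \<and> j \<le> n \<and> i + j = k}. coord_subspaces m i \<times> coord_subspaces n j)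
     (coord_subspaces (m + n) k)"
proof -
  have card_le: "card S \<le> N" and fin: "finite S" if "S \<subseteq> {..<N}" for S and N :: nat
    using card_mono[OF _ that] finite_subset[OF that] by simp_all
  have dom: "(\<Union>(i, j)\<in>{(i, j). i \<le> m \<and> j \<le> n \<and> i + j = k}. coord_subspaces m i \<times> coord_subspaces n j)
      = {(S1, S2). S1 \<subseteq> {..<m} \<and> S2 \<subseteq> {..<n} \<and> card S1 + card S2 = k}"
    using card_le by (auto simp: coord_subspaces_def)
  have card_join: "card (S1 \<union> (\<lambda>j. j + m) ` S2) = card S1 + card S2"
    if "S1 \<subseteq> {..<m}" "S2 \<subseteq> {..<n}" for S1 S2
  proof -
    have "card ((\<lambda>j. j + m) ` S2) = card S2"
      by (rule card_image) (auto simp: inj_on_def)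
    moreover have "S1 \<inter> (\<lambda>j. j + m) ` S2 = {}"
      using that(1) by auto
    ultimately show ?thesis
      using fin[OF that(1)] fin[OF that(2)] by (simp add: card_Un_disjoint)
  qed
  have card_unshift: "card ((\<lambda>i. i - m) ` (S - {..<m})) = card (S - {..<m})" for S
    by (rule card_image) (auto simp: inj_on_def)
  have shift_unshift: "(S1 \<union> (\<lambda>j. j + m) ` S2) \<inter> {..<m} = S1 \<and>
      (\<lambda>i. i - m) ` (S1 \<union> (\<lambda>j. j + m) ` S2 - {..<m}) = S2" if "S1 \<subseteq> {..<m}" for S1 S2
  proof -
    have "S1 \<union> (\<lambda>j. j + m) ` S2 - {..<m} = (\<lambda>j. j + m) ` S2"
      using that by auto
    then show ?thesis
      using that by (auto simp: image_image)
  qed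
  have unshift_shift: "(S \<inter> {..<m}) \<union> (\<lambda>j. j + m) ` ((\<lambda>i. i - m) ` (S - {..<m})) = S" for S
    by (auto simp: image_iff) (metis le_add_diff_inverse2 not_less)
  show ?thesis
    unfolding dom
  proof (rule bij_betw_byWitness[where f'="\<lambda>S. (S \<inter> {..<m}, (\<lambda>i. i - m) ` (S - {..<m}))"])
    show "(\<lambda>(S1, S2). S1 \<union> (\<lambda>j. j + m) ` S2) ` {(S1, S2). S1 \<subseteq> {..<m} \<and> S2 \<subseteq> {..<n} \<and> card S1 + card S2 = k}
        \<subseteq> coord_subspaces (m + n) k"
      using card_join by (auto simp: coord_subspaces_def)
    show "(\<lambda>S. (S \<inter> {..<m}, (\<lambda>i. i - m) ` (S - {..<m}))) ` coord_subspaces (m + n) k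
        \<subseteq> {(S1, S2). S1 \<subseteq> {..<m} \<and> S2 \<subseteq> {..<n} \<and> card S1 + card S2 = k}"
    proof clarify
      fix S assume "S \<in> coord_subspaces (m + n) k"
      then have S: "S \<subseteq> {..<m + n}" "card S = k"
        by (auto simp: coord_subspaces_def)
      have "card (S \<inter> {..<m}) + card ((\<lambda>i. i - m) ` (S - {..<m})) = k"
        using S card_Int_Diff[OF fin[OF S(1)]] by (simp add: card_unshift)
      moreover have "(\<lambda>i. i - m) ` (S - {..<m}) \<subseteq> {..<n}"
        using S(1) by force
      ultimately show "S \<inter> {..<m} \<subseteq> {..<m} \<and> (\<lambda>i. i - m) ` (S - {..<m}) \<subseteq> {..<n} \<and>
          card (S \<inter> {..<m}) + card ((\<lambda>i. i - m) ` (S - {..<m})) = k"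
        by simp
    qed
  qed (use shift_unshift unshift_shift in auto)
qed

lemma intrinsic_vol_prod_set:
  assumes "compact X" "compact Y"
  shows "intrinsic_vol (m + n) k (prod_set m n X Y) =
    (\<Sum>(i, j)\<in>{(i, j). i \<le> m \<and> j \<le> n \<and> i + j = k}.
        intrinsic_vol m i X * intrinsic_vol n j Y)"
proof -
  define I where "I = {(i, j). i \<le> m \<and> j \<le> n \<and> i + j = k}"
  define C where "C = (\<lambda>(i, j). coord_subspaces m i \<times> coord_subspaces n j)"
  have finite_coord_subspaces: "finite (coord_subspaces N i)" for N i
    unfolding coord_subspaces_def by (rule finite_subset[of _ "Pow {..<N}"]) auto
  have "(\<Sum>(i, j)\<in>I. intrinsic_vol m i X * intrinsic_vol n j Y)
      = (\<Sum>ij\<in>I. \<Sum>(S1, S2)\<in>C ij. proj_vol S1 X * proj_vol S2 Y)"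
    by (simp add: C_def intrinsic_vol_def sum_product sum.cartesian_product case_prod_beta)
  also have "\<dots> = (\<Sum>(S1, S2)\<in>(\<Union>ij\<in>I. C ij). proj_vol S1 X * proj_vol S2 Y)"
  proof (rule sum.UNION_disjoint[symmetric])
    show "finite I"
      unfolding I_def by (rule finite_subset[of _ "{..m} \<times> {..n}"]) auto
    show "\<forall>ij\<in>I. finite (C ij)"
      by (auto simp: C_def finite_coord_subspaces)
    show "\<forall>ij\<in>I. \<forall>ij'\<in>I. ij \<noteq> ij' \<longrightarrow> C ij \<inter> C ij' = {}"
      by (auto simp: C_def coord_subspaces_def)
  qed
  also have "\<dots> = (\<Sum>(S1, S2)\<in>(\<Union>ij\<in>I. C ij). proj_vol (S1 \<union> (\<lambda>j. j + m) ` S2) (prod_set m n X Y))"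
    by (intro sum.cong) (auto simp: C_def coord_subspaces_def proj_vol_prod_set assms)
  also have "\<dots> = intrinsic_vol (m + n) k (prod_set m n X Y)"
    unfolding intrinsic_vol_def
    using sum.reindex_bij_betw[OF bij_betw_coord_subspaces_add, of "\<lambda>S. proj_vol S (prod_set m n X Y)"]
    by (simp add: I_def C_def case_prod_beta)
  finally show ?thesis
    by (simp add: I_def)
qed

theorem proposition8p1:
  fixes m n k :: nat and X Y :: "(nat \<Rightarrow> real) set"
  assumes "X \<subseteq> euclid m" and "compact X" and "l1_convex m X"
    and "Y \<subseteq> euclid n" and "compact Y" and "l1_convex n Y"
    and "k \<le> m + n"
  shows "intrinsic_vol (m + n) k (prod_set m n X Y) =
    (\<Sum>(i, j)\<in>{(i, j). i \<le> m \<and> j \<le> n \<and> i + j = k}.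
        intrinsic_vol m i X * intrinsic_vol n j Y)"
  using assms(2,5) by (rule intrinsic_vol_prod_set)

end
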